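(* Consider a bipartite experiment where Alice chooses $x\in\{0,1\}$ and obtains $a\in\{\pm1\}$ with probability $\pi_{a|x}:=p(a|x)$, and conditioned on $(a,x)$ Bob's system is in the pure qubit state $\rho_{a|x}=|\psi_{a|x}\rangle\langle\psi_{a|x}|$. Bob chooses $y\in\{0,1\}$ and performs the binary projective measurement with observable $B_y=\mathbf b_y\cdot\boldsymbol\sigma$, $\|\mathbf b_y\|=1$, obtaining $b\in\{\pm1\}$, so that $p(a,b|x,y)=\pi_{a|x}\mathrm{Tr}\big(\rho_{a|x}\tfrac{I+bB_y}{2}\big)$. Let $E_{xy}=\sum_{a,b}ab\,p(a,b|x,y)$ and $S_{\mathrm{CHSH}}=E_{00}+E_{01}+E_{10}-E_{11}$. For each $x$ let $$D_x=\eta_1^2+\eta_2^2+2\eta_1\eta_2\sqrt{1-|\gamma_x|^2}+|\gamma_x|^2(\eta_1\eta_2-\eta_{\min}^2),$$ with $\eta_1=\pi_{+|x}$, $\eta_2=\pi_{-|x}$, $\eta_{\min}=\min\{\eta_1,\eta_2\}$, $\gamma_x=\langle\psi_{+|x}|\psi_{-|x}\rangle$. Then $$S_{\mathrm{CHSH}}\le 2\sqrt{(2D_0-1)^2+(2D_1-1)^2}.$$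
   Context: $\boldsymbol\sigma$ denotes the vector of Pauli matrices. $D_x$ is the fidelity-based discriminability of the conditional two-state ensemble $\{(\pi_{+|x},\rho_{+|x}),(\pi_{-|x},\rho_{-|x})\}$. *)

theory Defs
  imports "HOL-Analysis.Analysis"
begin

text \<open>Qubit state vectors live in complex^2, operators in complex^2^2.
  Index 1::2 is the first basis vector, 2::2 the second.\<close>

definition pauli_x :: "complex^2^2" where
  "pauli_x = (\<chi> i j. if i = j then 0 else 1)"

definition pauli_y :: "complex^2^2" where
  "pauli_y = (\<chi> i j. if i = j then 0 else if i = 1 then - \<i> else \<i>)"

definition pauli_z :: "complex^2^2" where
  "pauli_z = (\<chi> i j. if i \<noteq> j then 0 else if i = 1 then 1 else -1)"

definition pauli_obs :: "real^3 \<Rightarrow> complex^2^2" where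
  "pauli_obs b = (b$1) *\<^sub>R pauli_x + (b$2) *\<^sub>R pauli_y + (b$3) *\<^sub>R pauli_z"

definition ket_bra :: "complex^2 \<Rightarrow> complex^2^2" where
  "ket_bra \<psi> = (\<chi> i j. \<psi>$i * cnj (\<psi>$j))"

definition braket :: "complex^2 \<Rightarrow> complex^2 \<Rightarrow> complex" where
  "braket \<psi> \<phi> = (\<Sum>i\<in>UNIV. cnj (\<psi>$i) * \<phi>$i)"

definition corr_prob ::
  "(int \<Rightarrow> nat \<Rightarrow> real) \<Rightarrow> (int \<Rightarrow> nat \<Rightarrow> complex^2) \<Rightarrow> (nat \<Rightarrow> real^3)
     \<Rightarrow> int \<Rightarrow> int \<Rightarrow> nat \<Rightarrow> nat \<Rightarrow> real" where
  "corr_prob \<pi> \<psi> bv a b x y =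
     \<pi> a x * Re (trace (ket_bra (\<psi> a x) **
        ((1/2::real) *\<^sub>R (mat 1 + (of_int b :: real) *\<^sub>R pauli_obs (bv y)))))"

definition correlator ::
  "(int \<Rightarrow> nat \<Rightarrow> real) \<Rightarrow> (int \<Rightarrow> nat \<Rightarrow> complex^2) \<Rightarrow> (nat \<Rightarrow> real^3)
     \<Rightarrow> nat \<Rightarrow> nat \<Rightarrow> real" where
  "correlator \<pi> \<psi> bv x y =
     (\<Sum>a\<in>{-1,1}. \<Sum>b\<in>{-1,1}. of_int (a * b) * corr_prob \<pi> \<psi> bv a b x y)"

definition S_CHSH ::
  "(int \<Rightarrow> nat \<Rightarrow> real) \<Rightarrow> (int \<Rightarrow> nat \<Rightarrow> complex^2) \<Rightarrow> (nat \<Rightarrow> real^3) \<Rightarrow> real" where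
  "S_CHSH \<pi> \<psi> bv = correlator \<pi> \<psi> bv 0 0 + correlator \<pi> \<psi> bv 0 1
      + correlator \<pi> \<psi> bv 1 0 - correlator \<pi> \<psi> bv 1 1"

definition discr ::
  "(int \<Rightarrow> nat \<Rightarrow> real) \<Rightarrow> (int \<Rightarrow> nat \<Rightarrow> complex^2) \<Rightarrow> nat \<Rightarrow> real" where
  "discr \<pi> \<psi> x =
     (let \<eta>1 = \<pi> 1 x; \<eta>2 = \<pi> (-1) x; \<eta>min = min \<eta>1 \<eta>2;
          g = cmod (braket (\<psi> 1 x) (\<psi> (-1) x))
      in \<eta>1\<^sup>2 + \<eta>2\<^sup>2 + 2 * \<eta>1 * \<eta>2 * sqrt (1 - g\<^sup>2) + g\<^sup>2 * (\<eta>1 * \<eta>2 - \<eta>min\<^sup>2))"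

end

theory Submission
  imports Defs
begin

text \<open>Write \<open>r\<^sub>a\<^sub>|\<^sub>x\<close> for the Bloch vector of \<open>\<psi>\<^sub>a\<^sub>|\<^sub>x\<close>. Since
  \<open>Tr(\<rho> (b\<cdot>\<sigma>)) = r\<cdot>b\<close>, the correlator is \<open>E\<^sub>x\<^sub>y = v\<^sub>x\<cdot>b\<^sub>y\<close> with
  \<open>v\<^sub>x = \<pi>\<^sub>+\<^sub>|\<^sub>x r\<^sub>+\<^sub>|\<^sub>x - \<pi>\<^sub>-\<^sub>|\<^sub>x r\<^sub>-\<^sub>|\<^sub>x\<close>. Grouping the CHSH expression as
  \<open>(v\<^sub>0 + v\<^sub>1)\<cdot>b\<^sub>0 + (v\<^sub>0 - v\<^sub>1)\<cdot>b\<^sub>1\<close>, Cauchy-Schwarz and the parallelogram law bound it by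
  \<open>2 sqrt(|v\<^sub>0|\<^sup>2 + |v\<^sub>1|\<^sup>2)\<close>. For unit states the Bloch vectors are unit vectors with
  \<open>r\<^sub>+\<cdot>r\<^sub>- = 2|\<gamma>|\<^sup>2 - 1\<close>, so \<open>|v\<^sub>x|\<^sup>2 = 1 - 4\<eta>\<^sub>1\<eta>\<^sub>2|\<gamma>\<^sub>x|\<^sup>2\<close>, and an elementary polynomial
  inequality shows that this is at most \<open>(2D\<^sub>x - 1)\<^sup>2\<close>.\<close>

lemma norm_add_plus_norm_diff_le:
  fixes u v :: "'a::real_inner"
  shows "norm (u + v) + norm (u - v) \<le> 2 * sqrt ((norm u)\<^sup>2 + (norm v)\<^sup>2)"
proof -
  have "(norm (u + v) + norm (u - v))\<^sup>2 \<le> 2 * ((norm (u + v))\<^sup>2 + (norm (u - v))\<^sup>2)"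
    using sum_squares_bound[of "norm (u + v)" "norm (u - v)"] by (simp add: power2_sum)
  also have "\<dots> = 4 * ((norm u)\<^sup>2 + (norm v)\<^sup>2)"
    unfolding power2_norm_eq_inner
    by (simp add: inner_add_left inner_add_right inner_diff_left inner_diff_right inner_commute)
  finally have "norm (u + v) + norm (u - v) \<le> sqrt (4 * ((norm u)\<^sup>2 + (norm v)\<^sup>2))"
    by (rule real_le_rsqrt)
  then show ?thesis
    by (simp only: real_sqrt_mult real_sqrt_four)
qed

lemma chsh_inner_le:
  fixes v0 v1 b0 b1 :: "'a::real_inner"
  assumes "norm b0 \<le> 1" and "norm b1 \<le> 1"
  shows "v0 \<bullet> b0 + v0 \<bullet> b1 + v1 \<bullet> b0 - v1 \<bullet> b1 \<le> 2 * sqrt ((norm v0)\<^sup>2 + (norm v1)\<^sup>2)"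
proof -
  have inner_le_norm: "u \<bullet> b \<le> norm u" if "norm b \<le> 1" for u b :: 'a
    using norm_cauchy_schwarz[of u b] mult_left_le[OF that norm_ge_zero[of u]] by linarith
  have "(v0 + v1) \<bullet> b0 + (v0 - v1) \<bullet> b1 \<le> norm (v0 + v1) + norm (v0 - v1)"
    using assms by (intro add_mono inner_le_norm)
  also have "\<dots> \<le> 2 * sqrt ((norm v0)\<^sup>2 + (norm v1)\<^sup>2)"
    by (rule norm_add_plus_norm_diff_le)
  finally show ?thesis
    by (simp add: inner_add_left inner_diff_left)
qed

lemma power2_norm_scaleR_diff_unit:
  fixes r1 r2 :: "'a::real_inner"
  assumes "norm r1 = 1" and "norm r2 = 1"
  shows "(norm (e1 *\<^sub>R r1 - e2 *\<^sub>R r2))\<^sup>2 = e1\<^sup>2 + e2\<^sup>2 - 2 * e1 * e2 * (r1 \<bullet> r2)"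
proof -
  have "r1 \<bullet> r1 = 1" "r2 \<bullet> r2 = 1"
    using assms by (simp_all add: power2_norm_eq_inner[symmetric])
  then show ?thesis
    unfolding power2_norm_eq_inner
    by (simp add: inner_diff_left inner_diff_right inner_commute power2_eq_square algebra_simps)
qed

text \<open>The components are \<open>\<langle>\<psi>|\<sigma>\<^sub>k|\<psi>\<rangle>\<close> for \<open>k = x, y, z\<close>.\<close>
definition bloch_vector :: "complex^2 \<Rightarrow> real^3" where
  "bloch_vector \<psi> = (\<chi> k. if k = 1 then 2 * Re (cnj (\<psi>$1) * \<psi>$2)
                         else if k = 2 then 2 * Im (cnj (\<psi>$1) * \<psi>$2)
                         else (cmod (\<psi>$1))\<^sup>2 - (cmod (\<psi>$2))\<^sup>2)"

lemma bloch_vector_nth: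
  "bloch_vector \<psi> $ 1 = 2 * Re (cnj (\<psi>$1) * \<psi>$2)"
  "bloch_vector \<psi> $ 2 = 2 * Im (cnj (\<psi>$1) * \<psi>$2)"
  "bloch_vector \<psi> $ 3 = (cmod (\<psi>$1))\<^sup>2 - (cmod (\<psi>$2))\<^sup>2"
  by (simp_all add: bloch_vector_def)

lemma power2_norm_qubit: "(norm (\<psi>::complex^2))\<^sup>2 = (cmod (\<psi>$1))\<^sup>2 + (cmod (\<psi>$2))\<^sup>2"
  by (simp add: norm_vec_def L2_set_def sum_2)

lemma Re_trace_ket_bra_pauli_effect:
  "Re (trace (ket_bra \<psi> ** ((1/2::real) *\<^sub>R (mat 1 + r *\<^sub>R pauli_obs b))))
     = ((norm \<psi>)\<^sup>2 + r * (bloch_vector \<psi> \<bullet> b)) / 2"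
  unfolding power2_norm_qubit inner_vec_def sum_3 bloch_vector_nth cmod_power2
  by (simp add: trace_def matrix_matrix_mult_def ket_bra_def pauli_obs_def pauli_x_def
      pauli_y_def pauli_z_def mat_def sum_2 power2_eq_square algebra_simps
      del: complex_mod_mult_cnj)

lemma correlator_eq_inner_bloch_vector:
  "correlator \<pi> \<psi> bv x y =
     (\<pi> 1 x *\<^sub>R bloch_vector (\<psi> 1 x) - \<pi> (-1) x *\<^sub>R bloch_vector (\<psi> (-1) x)) \<bullet> bv y"
  unfolding correlator_def corr_prob_def Re_trace_ket_bra_pauli_effect
  by (simp add: inner_diff_left field_simps)

lemma inner_bloch_vector:
  "bloch_vector \<psi> \<bullet> bloch_vector \<phi> = 2 * (cmod (braket \<psi> \<phi>))\<^sup>2 - (norm \<psi>)\<^sup>2 * (norm \<phi>)\<^sup>2"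
  unfolding power2_norm_qubit inner_vec_def sum_3 bloch_vector_nth braket_def sum_2
    inner_real_def cmod_power2
  by (simp del: complex_mod_mult_cnj) algebra

lemma braket_self: "braket \<psi> \<psi> = of_real ((norm \<psi>)\<^sup>2)"
  unfolding braket_def power2_norm_qubit cmod_power2
  by (simp add: sum_2 complex_eq_iff power2_eq_square)

lemma norm_bloch_vector: "norm (bloch_vector \<psi>) = (norm \<psi>)\<^sup>2"
proof -
  have "(norm (bloch_vector \<psi>))\<^sup>2 = bloch_vector \<psi> \<bullet> bloch_vector \<psi>"
    by (rule power2_norm_eq_inner)
  also have "\<dots> = ((norm \<psi>)\<^sup>2)\<^sup>2"
    unfolding inner_bloch_vector braket_self norm_of_real abs_power2 by algebra
  finally have "(norm (bloch_vector \<psi>))\<^sup>2 = ((norm \<psi>)\<^sup>2)\<^sup>2" .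
  then show ?thesis
    by (rule power2_eq_imp_eq) simp_all
qed

lemma discriminability_polynomial_ineq:
  fixes c s :: real
  assumes "0 \<le> c" "c \<le> 1" "0 \<le> s" "s \<le> 1"
  shows "c\<^sup>2 + s\<^sup>2 - c\<^sup>2 * s\<^sup>2 \<le> (c\<^sup>2 + (1 - c\<^sup>2) * s + c * (1 - c) * (1 - s\<^sup>2))\<^sup>2"
proof -
  define B where "B = 2 + 2 * c + 2 * s - c * s * (1 + s) - c\<^sup>2 * s * (1 - s)"
  have "c * (s * (1 + s)) \<le> s * (1 + s)" "s * s \<le> s"
    using assms by (simp_all add: mult_left_le_one_le)
  moreover have "c\<^sup>2 * (s * (1 - s)) \<le> 1"
    using assms by (intro mult_le_one) (simp_all add: power_le_one mult_le_one)
  ultimately have "0 \<le> B"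
    using assms unfolding B_def by (simp add: algebra_simps)
  moreover have "(c\<^sup>2 + (1 - c\<^sup>2) * s + c * (1 - c) * (1 - s\<^sup>2))\<^sup>2 - (c\<^sup>2 + s\<^sup>2 - c\<^sup>2 * s\<^sup>2)
      = c * (1 - c) * s * (1 - s) * B"
    unfolding B_def by (simp add: power2_eq_square algebra_simps)
  ultimately show ?thesis
    using assms by (smt (verit) mult_nonneg_nonneg)
qed

lemma discriminability_ineq:
  fixes \<eta>1 \<eta>2 g :: real
  assumes "0 \<le> \<eta>1" "0 \<le> \<eta>2" "\<eta>1 + \<eta>2 = 1" "0 \<le> g" "g \<le> 1"
  shows "1 - 4 * \<eta>1 * \<eta>2 * g\<^sup>2
    \<le> (2 * (\<eta>1\<^sup>2 + \<eta>2\<^sup>2 + 2 * \<eta>1 * \<eta>2 * sqrt (1 - g\<^sup>2) + g\<^sup>2 * (\<eta>1 * \<eta>2 - (min \<eta>1 \<eta>2)\<^sup>2)) - 1)\<^sup>2"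
proof -
  txt \<open>With \<open>c = |\<eta>\<^sub>1 - \<eta>\<^sub>2|\<close> the weights are \<open>(1 \<plusminus> c)/2\<close>, so both sides become
    polynomials in \<open>c\<close> and \<open>s = sqrt(1 - g\<^sup>2)\<close>.\<close>
  define c where "c = \<bar>\<eta>1 - \<eta>2\<bar>"
  define s where "s = sqrt (1 - g\<^sup>2)"
  have c: "0 \<le> c" "c \<le> 1"
    using assms by (auto simp: c_def)
  have "g\<^sup>2 \<le> 1"
    using assms by (simp add: power_le_one)
  then have s: "0 \<le> s" "s \<le> 1" and g: "g\<^sup>2 = 1 - s\<^sup>2"
    by (auto simp: s_def)
  have \<eta>2: "\<eta>2 = 1 - \<eta>1"
    using assms by simp
  have "1 - 4 * \<eta>1 * \<eta>2 * g\<^sup>2 = c\<^sup>2 + s\<^sup>2 - c\<^sup>2 * s\<^sup>2"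
    unfolding g c_def power2_abs \<eta>2 by (simp add: power2_eq_square algebra_simps)
  moreover have "2 * (\<eta>1\<^sup>2 + \<eta>2\<^sup>2 + 2 * \<eta>1 * \<eta>2 * s + g\<^sup>2 * (\<eta>1 * \<eta>2 - (min \<eta>1 \<eta>2)\<^sup>2)) - 1
      = c\<^sup>2 + (1 - c\<^sup>2) * s + c * (1 - c) * (1 - s\<^sup>2)"
  proof (cases "\<eta>1 \<le> \<eta>2")
    case True
    then have min_eq: "min \<eta>1 \<eta>2 = \<eta>1" and c_eq: "c = 1 - 2 * \<eta>1"
      using \<eta>2 by (auto simp: c_def)
    show ?thesis
      by (simp only: min_eq c_eq g) (simp add: \<eta>2 power2_eq_square algebra_simps)
  next
    case False
    then have min_eq: "min \<eta>1 \<eta>2 = 1 - \<eta>1" and c_eq: "c = 2 * \<eta>1 - 1"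
      using \<eta>2 by (auto simp: c_def)
    show ?thesis
      by (simp only: min_eq c_eq g) (simp add: \<eta>2 power2_eq_square algebra_simps)
  qed
  ultimately show ?thesis
    using discriminability_polynomial_ineq[OF c s] by (simp add: s_def)
qed

lemma power2_norm_bloch_mixture_le_discr:
  assumes "0 \<le> \<pi> 1 x" and "0 \<le> \<pi> (-1) x" and "\<pi> 1 x + \<pi> (-1) x = 1"
    and "norm (\<psi> 1 x) = 1" and "norm (\<psi> (-1) x) = 1"
  shows "(norm (\<pi> 1 x *\<^sub>R bloch_vector (\<psi> 1 x) - \<pi> (-1) x *\<^sub>R bloch_vector (\<psi> (-1) x)))\<^sup>2
           \<le> (2 * discr \<pi> \<psi> x - 1)\<^sup>2"
proof -
  define g where "g = cmod (braket (\<psi> 1 x) (\<psi> (-1) x))"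
  have unit: "norm (bloch_vector (\<psi> 1 x)) = 1" "norm (bloch_vector (\<psi> (-1) x)) = 1"
    using assms by (simp_all add: norm_bloch_vector)
  have inner: "bloch_vector (\<psi> 1 x) \<bullet> bloch_vector (\<psi> (-1) x) = 2 * g\<^sup>2 - 1"
    using assms by (simp add: inner_bloch_vector g_def)
  then have "2 * g\<^sup>2 - 1 \<le> 1"
    using norm_cauchy_schwarz[of "bloch_vector (\<psi> 1 x)" "bloch_vector (\<psi> (-1) x)"] unit by simp
  then have "g \<le> 1"
    by (simp add: g_def power_le_one_iff)
  have "(norm (\<pi> 1 x *\<^sub>R bloch_vector (\<psi> 1 x) - \<pi> (-1) x *\<^sub>R bloch_vector (\<psi> (-1) x)))\<^sup>2
      = (\<pi> 1 x)\<^sup>2 + (\<pi> (-1) x)\<^sup>2 - 2 * \<pi> 1 x * \<pi> (-1) x * (2 * g\<^sup>2 - 1)"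
    by (simp add: power2_norm_scaleR_diff_unit unit inner)
  also have "\<dots> = (\<pi> 1 x + \<pi> (-1) x)\<^sup>2 - 4 * \<pi> 1 x * \<pi> (-1) x * g\<^sup>2"
    by (simp add: power2_eq_square algebra_simps)
  also have "\<dots> = 1 - 4 * \<pi> 1 x * \<pi> (-1) x * g\<^sup>2"
    using assms(3) by simp
  also have "\<dots> \<le> (2 * discr \<pi> \<psi> x - 1)\<^sup>2"
    unfolding discr_def Let_def g_def[symmetric]
    by (rule discriminability_ineq[OF assms(1-3) _ \<open>g \<le> 1\<close>]) (simp add: g_def)
  finally show ?thesis .
qed

theorem corollary1:
  fixes \<pi> :: "int \<Rightarrow> nat \<Rightarrow> real"
    and \<psi> :: "int \<Rightarrow> nat \<Rightarrow> complex^2"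
    and bv :: "nat \<Rightarrow> real^3"
  assumes prob_nonneg: "\<And>a x. a \<in> {-1, 1} \<Longrightarrow> x \<in> {0, 1} \<Longrightarrow> \<pi> a x \<ge> 0"
    and prob_sum: "\<And>x. x \<in> {0, 1} \<Longrightarrow> \<pi> 1 x + \<pi> (-1) x = 1"
    and states_unit: "\<And>a x. a \<in> {-1, 1} \<Longrightarrow> x \<in> {0, 1} \<Longrightarrow> norm (\<psi> a x) = 1"
    and meas_unit: "\<And>y. y \<in> {0, 1} \<Longrightarrow> norm (bv y) = 1"
  shows "S_CHSH \<pi> \<psi> bv
           \<le> 2 * sqrt ((2 * discr \<pi> \<psi> 0 - 1)\<^sup>2 + (2 * discr \<pi> \<psi> 1 - 1)\<^sup>2)"
proof -
  define v where "v x = \<pi> 1 x *\<^sub>R bloch_vector (\<psi> 1 x) - \<pi> (-1) x *\<^sub>R bloch_vector (\<psi> (-1) x)"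
    for x
  have "S_CHSH \<pi> \<psi> bv = v 0 \<bullet> bv 0 + v 0 \<bullet> bv 1 + v 1 \<bullet> bv 0 - v 1 \<bullet> bv 1"
    by (simp add: S_CHSH_def correlator_eq_inner_bloch_vector v_def)
  also have "\<dots> \<le> 2 * sqrt ((norm (v 0))\<^sup>2 + (norm (v 1))\<^sup>2)"
    using meas_unit by (intro chsh_inner_le) simp_all
  also have "\<dots> \<le> 2 * sqrt ((2 * discr \<pi> \<psi> 0 - 1)\<^sup>2 + (2 * discr \<pi> \<psi> 1 - 1)\<^sup>2)"
  proof -
    have "(norm (v x))\<^sup>2 \<le> (2 * discr \<pi> \<psi> x - 1)\<^sup>2" if "x \<in> {0, 1}" for x
      unfolding v_def using that prob_nonneg prob_sum states_unit
      by (intro power2_norm_bloch_mixture_le_discr) auto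
    then show ?thesis
      by (simp add: add_mono)
  qed
  finally show ?thesis .
qed

end
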